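(* Fix $x_1\in\mathbb R^d$ and $B\in\mathbb R^{d\times d}$. Then $$\left\|\mathbb E_{-1}[\mu_1]-\Sigma B^\top x_1\right\|_F^2\le S_1(x_1)+S_2(x_1),$$ where $$S_1(x_1)=\frac{2\|I-\Sigma B^\top\|_{\mathrm{op}}^2}{(n-1)^2}\exp\left(\frac2{n-1}x_1^\top B\Sigma B^\top x_1\right)\exp(2x_1^\top Bx_1)\|x_1\|_2^2,$$ $$S_2(x_1)=\frac{2\|\Sigma B^\top\|_{\mathrm{op}}^2}{(n-1)^2}\exp(4x_1^\top B\Sigma B^\top x_1)\|x_1\|_2^2.$$
   Context: $n\ge2$; $\Sigma\in\mathbb R^{d\times d}$ symmetric positive semidefinite; $x_2,\dots,x_n$ i.i.d. $\mathcal N(0,\Sigma)$; $\mathbb E_{-1}$ is expectation over $x_2,\dots,x_n$ with $x_1$ fixed. $p_{1j}=\exp(x_1^\top Bx_j)/\sum_{k=1}^n\exp(x_1^\top Bx_k)$ for $j=1,\dots,n$, and $\mu_1=\sum_{j=1}^np_{1j}x_j$. *)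

theory Defs
  imports "HOL-Analysis.Analysis" "HOL-Probability.Probability"
begin

definition std_gauss_vec :: "(real ^ 'd) measure" where
  "std_gauss_vec = distr (PiM UNIV (\<lambda>_::'d. density lborel std_normal_density)) borel
                        (\<lambda>f. \<chi> i. f i)"

text \<open>N(0, A A^T): law of A z with z standard Gaussian.\<close>
definition gauss_vec :: "real ^ 'd ^ 'd \<Rightarrow> (real ^ 'd) measure" where
  "gauss_vec A = distr std_gauss_vec borel (\<lambda>z. A *v z)"

definition attn_mu1 :: "nat \<Rightarrow> real ^ 'd ^ 'd \<Rightarrow> real ^ 'd \<Rightarrow> (nat \<Rightarrow> real ^ 'd) \<Rightarrow> real ^ 'd" where
  "attn_mu1 n B x1 xs =
     (let x = (\<lambda>j. if j = 1 then x1 else xs j);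
          Z = (\<Sum>k=1..n. exp (x1 \<bullet> (B *v x k)))
      in (\<Sum>j=1..n. (exp (x1 \<bullet> (B *v x j)) / Z) *\<^sub>R x j))"

definition op_norm :: "real ^ 'd ^ 'd \<Rightarrow> real" where
  "op_norm M = onorm (\<lambda>v. M *v v)"

end

theory Submission
  imports Defs
begin

(* Write p_1 = exp a / Z for the weight of the query on itself (a = x_1' B x_1) and
   p_j = exp (v' x_j) / Z, v = B' x_1, for the Gaussian tokens.  Since d p_j / d (v' x_j) = p_j - p_j^2,
   Gaussian integration by parts (Stein's identity) in x_j, with the other tokens frozen, gives
   E[p_j x_j] = E[p_j - p_j^2] Sigma v.  As the weights sum to one,
   E[mu_1] - Sigma v = P (x_1 - Sigma v) - Q Sigma v  with  P = E[p_1],  Q = sum_j E[p_j^2].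
   Jensen's inequality 1 / sum_k exp s_k <= exp (- mean s) / m bounds p_1 and p_j^2 by exponentials of
   linear forms in the tokens, whose expectations are Gaussian moment generating functions:
   P <= exp a exp (q / 2m) / m  and  Q <= exp (2 q) / m,  where q = v' Sigma v and m = n - 1.
   Finally |P y - Q z|^2 <= 2 P^2 |y|^2 + 2 Q^2 |z|^2. *)

section \<open>The standard normal distribution\<close>

lemma prob_space_std_normal_distribution: "prob_space std_normal_distribution"
  by (rule prob_space_normal_density) simp

lemma std_normal_density_has_real_derivative:
  "(std_normal_density has_real_derivative - x * std_normal_density x) (at x)"
  unfolding std_normal_density_def
  by (auto intro!: derivative_eq_intros simp: field_simps power2_eq_square)

lemma std_normal_density_tendsto_0:
  "(std_normal_density \<longlongrightarrow> 0) at_top" "(std_normal_density \<longlongrightarrow> 0) at_bot"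
proof -
  have "LIM x at_top. 1 / 2 * (x::real)\<^sup>2 :> at_top"
    by (rule filterlim_tendsto_pos_mult_at_top[OF tendsto_const])
       (auto intro!: filterlim_pow_at_top filterlim_ident)
  then have "LIM x at_top. - ((x::real)\<^sup>2 / 2) :> at_bot"
    by (simp add: filterlim_uminus_at_top)
  then have "((\<lambda>x. exp (- ((x::real)\<^sup>2 / 2))) \<longlongrightarrow> 0) at_top"
    by (rule filterlim_compose[OF exp_at_bot])
  then have "((\<lambda>x. 1 / sqrt (2 * pi) * exp (- ((x::real)\<^sup>2 / 2))) \<longlongrightarrow> 1 / sqrt (2 * pi) * 0) at_top"
    by (intro tendsto_intros)
  then show top: "(std_normal_density \<longlongrightarrow> 0) at_top"
    unfolding std_normal_density_def[abs_def] by simp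
  have "(\<lambda>x. std_normal_density (- x)) = std_normal_density"
    by (auto simp: std_normal_density_def)
  then show "(std_normal_density \<longlongrightarrow> 0) at_bot"
    using top by (simp add: filterlim_at_bot_mirror)
qed

lemma integral_std_normal_distribution:
  "f \<in> borel_measurable borel \<Longrightarrow>
    integral\<^sup>L std_normal_distribution f = (\<integral>x. std_normal_density x * f x \<partial>lborel)"
  by (simp add: integral_density)

lemma borel_measurable_has_real_derivative:
  "(\<And>x. (f has_real_derivative f' x) (at x)) \<Longrightarrow> f \<in> borel_measurable borel"
  by (intro borel_measurable_continuous_onI continuous_at_imp_continuous_on ballI DERIV_isCont)

lemma integrable_std_normal_density_mult:
  fixes f :: "real \<Rightarrow> real"
  assumes "f \<in> borel_measurable borel" "\<And>x. \<bar>f x\<bar> \<le> K * \<bar>x\<bar> ^ k"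
  shows "integrable lborel (\<lambda>x. std_normal_density x * f x)"
proof (rule Bochner_Integration.integrable_bound)
  show "integrable lborel (\<lambda>x. K * (std_normal_density x * \<bar>x\<bar> ^ k))"
    by (intro integrable_mult_right integrable_std_normal_moment_abs)
  show "AE x in lborel. norm (std_normal_density x * f x) \<le> norm (K * (std_normal_density x * \<bar>x\<bar> ^ k))"
  proof (intro AE_I2)
    fix x
    have "std_normal_density x * \<bar>f x\<bar> \<le> std_normal_density x * (\<bar>K\<bar> * \<bar>x\<bar> ^ k)"
      using assms(2)[of x] by (intro mult_left_mono) (auto intro: order_trans[OF _ mult_right_mono])
    then show "norm (std_normal_density x * f x) \<le> norm (K * (std_normal_density x * \<bar>x\<bar> ^ k))"
      by (simp add: abs_mult ac_simps)
  qed
qed (use assms in simp)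

text \<open>Stein's identity: integrate \<open>(- \<phi> g)' = x \<phi> g - \<phi> g'\<close> over the real line.\<close>
lemma std_normal_stein:
  fixes g g' :: "real \<Rightarrow> real"
  assumes g: "\<And>x. (g has_real_derivative g' x) (at x)" and g': "continuous_on UNIV g'"
    and bounded: "\<And>x. \<bar>g x\<bar> \<le> K" "\<And>x. \<bar>g' x\<bar> \<le> K"
  shows "(\<integral>x. x * g x \<partial>std_normal_distribution) = (\<integral>x. g' x \<partial>std_normal_distribution)"
proof -
  have [measurable]: "g \<in> borel_measurable borel" "g' \<in> borel_measurable borel"
    using g g' by (auto intro: borel_measurable_has_real_derivative borel_measurable_continuous_onI)
  have x_g: "\<bar>x * g x\<bar> \<le> K * \<bar>x\<bar> ^ 1" for x
    using mult_left_mono[OF bounded(1)[of x] abs_ge_zero[of x]] by (simp add: abs_mult mult.commute)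
  have int1: "integrable lborel (\<lambda>x. std_normal_density x * (x * g x))"
    by (rule integrable_std_normal_density_mult[OF _ x_g]) simp
  have int2: "integrable lborel (\<lambda>x. std_normal_density x * g' x)"
    using bounded(2) by (intro integrable_std_normal_density_mult[where K = K and k = 0]) auto
  define F where "F x = - std_normal_density x * g x" for x
  have F_tendsto: "(F \<longlongrightarrow> 0) G" if "(std_normal_density \<longlongrightarrow> 0) G" for G
  proof (rule Lim_null_comparison)
    show "\<forall>\<^sub>F x in G. norm (F x) \<le> K * std_normal_density x"
      using mult_right_mono[OF bounded(1) normal_density_nonneg]
      by (intro always_eventually allI) (simp add: F_def abs_mult mult.commute)
    show "((\<lambda>x. K * std_normal_density x) \<longlongrightarrow> 0) G"
      using tendsto_mult_right_zero[OF that] by simp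
  qed
  have "(LBINT x=-\<infinity>..\<infinity>. std_normal_density x * (x * g x) - std_normal_density x * g' x) = 0 - 0"
  proof (rule interval_integral_FTC_integrable)
    fix x
    show "(F has_vector_derivative std_normal_density x * (x * g x) - std_normal_density x * g' x) (at x)"
      unfolding has_real_derivative_iff_has_vector_derivative[symmetric] F_def
      by (auto intro!: derivative_eq_intros std_normal_density_has_real_derivative g
               simp: algebra_simps)
    show "isCont (\<lambda>x. std_normal_density x * (x * g x) - std_normal_density x * g' x) x"
      using DERIV_isCont[OF g] g'
      by (auto intro!: continuous_intros simp: continuous_on_eq_continuous_at std_normal_density_def)
  next
    show "set_integrable lborel (einterval (- \<infinity>) \<infinity>)
        (\<lambda>x. std_normal_density x * (x * g x) - std_normal_density x * g' x)"
      unfolding set_integrable_def using int1 int2 by simp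
    show "((F \<circ> real_of_ereal) \<longlongrightarrow> 0) (at_right (- \<infinity>))" "((F \<circ> real_of_ereal) \<longlongrightarrow> 0) (at_left \<infinity>)"
      unfolding ereal_tendsto_simps1 by (intro F_tendsto std_normal_density_tendsto_0)+
  qed simp
  then show ?thesis
    using int1 int2
    by (simp add: integral_std_normal_distribution interval_lebesgue_integral_def
        set_lebesgue_integral_def)
qed

lemma std_normal_stein_affine:
  fixes h h' :: "real \<Rightarrow> real"
  assumes h: "\<And>t. (h has_real_derivative h' t) (at t)" and h': "continuous_on UNIV h'"
    and bounded: "\<And>t. \<bar>h t\<bar> \<le> K" "\<And>t. \<bar>h' t\<bar> \<le> K"
  shows "(\<integral>y. y * h (b * y + c) \<partial>std_normal_distribution)
    = (\<integral>y. b * h' (b * y + c) \<partial>std_normal_distribution)"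
proof (rule std_normal_stein)
  have K: "0 \<le> K"
    using bounded(1)[of 0] by linarith
  show "((\<lambda>y. h (b * y + c)) has_real_derivative b * h' (b * y + c)) (at y)" for y
  proof -
    have "((\<lambda>y. b * y + c) has_real_derivative b) (at y)"
      by (auto intro!: derivative_eq_intros)
    from DERIV_chain2[OF h this] show ?thesis
      by (simp add: mult.commute)
  qed
  show "continuous_on UNIV (\<lambda>y. b * h' (b * y + c))"
    by (intro continuous_intros continuous_on_compose2[OF h']) auto
  show "\<bar>h (b * y + c)\<bar> \<le> K * (1 + \<bar>b\<bar>)" for y
  proof -
    have "K \<le> K * (1 + \<bar>b\<bar>)"
      using K by (simp add: algebra_simps)
    then show ?thesis
      using bounded(1)[of "b * y + c"] by linarith
  qed
  show "\<bar>b * h' (b * y + c)\<bar> \<le> K * (1 + \<bar>b\<bar>)" for y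
    using mult_left_mono[OF bounded(2)[of "b * y + c"] abs_ge_zero[of b]] K
    by (simp add: abs_mult algebra_simps)
qed

lemma std_normal_mgf:
  fixes c :: real
  shows "integrable std_normal_distribution (\<lambda>x. exp (c * x))"
    "(\<integral>x. exp (c * x) \<partial>std_normal_distribution) = exp (c\<^sup>2 / 2)"
proof -
  have "std_normal_density x * exp (c * x) = exp (c\<^sup>2 / 2) * normal_density c 1 x" for x
    unfolding std_normal_density_def normal_density_def mult_exp_exp[symmetric]
    by (simp add: mult_exp_exp field_simps power2_eq_square)
  then show "integrable std_normal_distribution (\<lambda>x. exp (c * x))"
    "(\<integral>x. exp (c * x) \<partial>std_normal_distribution) = exp (c\<^sup>2 / 2)"
    by (simp_all add: integrable_density integral_density)
qed

section \<open>Gaussian vectors\<close>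

lemma integrable_PiM_component:
  fixes f :: "_ \<Rightarrow> 'b::{banach, second_countable_topology}"
  assumes "\<And>i. i \<in> I \<Longrightarrow> prob_space (M i)" "j \<in> I" "integrable (M j) f"
  shows "integrable (PiM I M) (\<lambda>\<omega>. f (\<omega> j))"
proof -
  have "integrable (distr (PiM I M) (M j) (\<lambda>\<omega>. \<omega> j)) f"
    using assms by (simp add: distr_PiM_component)
  then show ?thesis
    using assms(2,3) by (subst (asm) integrable_distr_eq) (auto intro: measurable_component_singleton)
qed

lemma (in product_sigma_finite) product_integral_eq_by_sections:
  fixes f g :: "_ \<Rightarrow> 'b::{banach, second_countable_topology}"
  assumes "finite I" "i \<in> I" "integrable (PiM I M) f" "integrable (PiM I M) g"
    and "\<And>x. (\<integral>y. f (x(i := y)) \<partial>M i) = (\<integral>y. g (x(i := y)) \<partial>M i)"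
  shows "integral\<^sup>L (PiM I M) f = integral\<^sup>L (PiM I M) g"
proof -
  have I: "insert i (I - {i}) = I"
    using assms(2) by blast
  have "integral\<^sup>L (PiM I M) h = (\<integral>x. (\<integral>y. h (x(i := y)) \<partial>M i) \<partial>PiM (I - {i}) M)"
    if "integrable (PiM I M) h" for h :: "_ \<Rightarrow> 'b"
    using product_integral_insert[of "I - {i}" i h] that assms(1) unfolding I by simp
  then show ?thesis
    using assms by simp
qed

interpretation std_normal_product: product_sigma_finite "\<lambda>_::'i. std_normal_distribution"
  by (simp add: product_sigma_finite_def prob_space_imp_sigma_finite prob_space_std_normal_distribution)

lemma measurable_vec_lambda_PiM [measurable]:
  "(\<lambda>\<omega>. \<chi> i. \<omega> i) \<in> borel_measurable (PiM UNIV (\<lambda>_::'d::finite. std_normal_distribution))"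
proof (subst borel_measurable_euclidean_space, intro ballI)
  fix b :: "real ^ 'd" assume "b \<in> Basis"
  then obtain j where "b = axis j 1" by (auto simp: Basis_vec_def)
  then show "(\<lambda>\<omega>. (\<chi> i. \<omega> i) \<bullet> b) \<in> borel_measurable (PiM UNIV (\<lambda>_. std_normal_distribution))"
    by (simp add: inner_axis)
qed

lemma prob_space_std_gauss_vec: "prob_space std_gauss_vec"
  unfolding std_gauss_vec_def
  by (intro prob_space.prob_space_distr prob_space_PiM prob_space_std_normal_distribution
      measurable_vec_lambda_PiM)

lemma sets_std_gauss_vec [simp, measurable_cong]: "sets std_gauss_vec = sets borel"
  and space_std_gauss_vec [simp]: "space std_gauss_vec = UNIV"
  unfolding std_gauss_vec_def by simp_all

lemma
  fixes f :: "real ^ 'd::finite \<Rightarrow> 'b::{banach, second_countable_topology}"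
  assumes [measurable]: "f \<in> borel_measurable borel"
  shows integral_std_gauss_vec:
      "integral\<^sup>L std_gauss_vec f = (\<integral>\<omega>. f (\<chi> i. \<omega> i) \<partial>PiM UNIV (\<lambda>_. std_normal_distribution))"
    and integrable_std_gauss_vec:
      "integrable std_gauss_vec f \<longleftrightarrow> integrable (PiM UNIV (\<lambda>_. std_normal_distribution)) (\<lambda>\<omega>. f (\<chi> i. \<omega> i))"
  unfolding std_gauss_vec_def by (rule integral_distr integrable_distr_eq; measurable)+

lemma integrable_std_gauss_vec_norm: "integrable (std_gauss_vec :: (real ^ 'd::finite) measure) norm"
proof -
  have "integrable (PiM UNIV (\<lambda>_::'d. std_normal_distribution)) (\<lambda>\<omega>. \<Sum>i\<in>UNIV. \<bar>\<omega> i\<bar>)"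
    using integrable_std_normal_distribution_moment[of 1]
    by (intro Bochner_Integration.integrable_sum integrable_PiM_component
        prob_space_std_normal_distribution integrable_abs) auto
  then have "integrable (PiM UNIV (\<lambda>_::'d. std_normal_distribution)) (\<lambda>\<omega>. norm (\<chi> i. \<omega> i))"
    by (rule Bochner_Integration.integrable_bound)
       (use norm_le_l1_cart[of "\<chi> i. _ i"] in \<open>auto intro!: AE_I2\<close>)
  then show ?thesis
    by (simp add: integrable_std_gauss_vec)
qed

lemma std_gauss_vec_mgf:
  fixes u :: "real ^ 'd::finite"
  shows "integrable std_gauss_vec (\<lambda>z. exp (u \<bullet> z))"
    "(\<integral>z. exp (u \<bullet> z) \<partial>std_gauss_vec) = exp (u \<bullet> u / 2)"
proof -
  have exp_inner: "exp (u \<bullet> (\<chi> i. \<omega> i)) = (\<Prod>i\<in>UNIV. exp (u $ i * \<omega> i))" for \<omega> :: "'d \<Rightarrow> real"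
    by (simp add: inner_vec_def exp_sum)
  have "integrable (PiM UNIV (\<lambda>_::'d. std_normal_distribution)) (\<lambda>\<omega>. \<Prod>i\<in>UNIV. exp (u $ i * \<omega> i))"
    by (intro std_normal_product.product_integrable_prod std_normal_mgf) auto
  then show "integrable std_gauss_vec (\<lambda>z. exp (u \<bullet> z))"
    by (simp add: integrable_std_gauss_vec exp_inner)
  have "(\<integral>\<omega>. (\<Prod>i\<in>UNIV. exp (u $ i * \<omega> i)) \<partial>PiM UNIV (\<lambda>_::'d. std_normal_distribution))
      = (\<Prod>i\<in>UNIV. exp ((u $ i)\<^sup>2 / 2))"
    by (subst std_normal_product.product_integral_prod) (auto intro: std_normal_mgf simp: std_normal_mgf)
  also have "\<dots> = exp (u \<bullet> u / 2)"
    by (simp add: exp_sum[symmetric] inner_vec_def sum_divide_distrib power2_eq_square)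
  finally show "(\<integral>z. exp (u \<bullet> z) \<partial>std_gauss_vec) = exp (u \<bullet> u / 2)"
    by (simp add: integral_std_gauss_vec exp_inner)
qed

lemma inner_vec_lambda_fun_upd:
  "u \<bullet> (\<chi> l. (x(i := y)) l) = u $ i * y + u \<bullet> (\<chi> l. (x(i := 0)) l)"
proof -
  have "(\<chi> l. (x(i := y)) l) = (\<chi> l. (x(i := 0)) l) + y *\<^sub>R axis i 1"
    by (simp add: vec_eq_iff axis_def)
  then show ?thesis
    by (simp add: inner_add_right inner_axis)
qed

lemma std_gauss_vec_stein_component:
  fixes h h' :: "real \<Rightarrow> real" and u :: "real ^ 'd::finite"
  assumes h: "\<And>t. (h has_real_derivative h' t) (at t)" and h': "continuous_on UNIV h'"
    and bounded: "\<And>t. \<bar>h t\<bar> \<le> K" "\<And>t. \<bar>h' t\<bar> \<le> K"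
  shows "(\<integral>z. h (u \<bullet> z) * z $ i \<partial>std_gauss_vec) = (\<integral>z. u $ i * h' (u \<bullet> z) \<partial>std_gauss_vec)"
proof -
  interpret prob_space "PiM UNIV (\<lambda>_::'d. std_normal_distribution)"
    by (intro prob_space_PiM prob_space_std_normal_distribution)
  have K: "0 \<le> K"
    using bounded(1)[of 0] by linarith
  have [measurable]: "h \<in> borel_measurable borel" "h' \<in> borel_measurable borel"
    using h h' by (auto intro: borel_measurable_has_real_derivative borel_measurable_continuous_onI)
  have int: "integrable (PiM UNIV (\<lambda>_. std_normal_distribution)) (\<lambda>\<omega>. h (u \<bullet> (\<chi> l. \<omega> l)) * \<omega> i)"
  proof (rule Bochner_Integration.integrable_bound)
    show "integrable (PiM UNIV (\<lambda>_. std_normal_distribution)) (\<lambda>\<omega>. K * \<bar>\<omega> i\<bar>)"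
      using integrable_std_normal_distribution_moment[of 1]
      by (intro integrable_PiM_component prob_space_std_normal_distribution integrable_mult_right) auto
    show "AE \<omega> in PiM UNIV (\<lambda>_. std_normal_distribution).
        norm (h (u \<bullet> (\<chi> l. \<omega> l)) * \<omega> i) \<le> norm (K * \<bar>\<omega> i\<bar>)"
      using K bounded(1) by (intro AE_I2) (auto simp: abs_mult intro!: mult_right_mono)
  qed measurable
  have int': "integrable (PiM UNIV (\<lambda>_. std_normal_distribution)) (\<lambda>\<omega>. u $ i * h' (u \<bullet> (\<chi> l. \<omega> l)))"
    using bounded(2) by (intro integrable_mult_right integrable_const_bound[where B = K] AE_I2) auto
  have "(\<integral>y. h (u \<bullet> (\<chi> l. (x(i := y)) l)) * (x(i := y)) i \<partial>std_normal_distribution)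
      = (\<integral>y. u $ i * h' (u \<bullet> (\<chi> l. (x(i := y)) l)) \<partial>std_normal_distribution)" for x
  proof -
    define c where "c = u \<bullet> (\<chi> l. (x(i := 0)) l)"
    have "u \<bullet> (\<chi> l. (x(i := y)) l) = u $ i * y + c" for y
      unfolding c_def by (rule inner_vec_lambda_fun_upd)
    then show ?thesis
      using std_normal_stein_affine[OF h h' bounded, of "u $ i" c] by (simp add: mult.commute)
  qed
  then have "(\<integral>\<omega>. h (u \<bullet> (\<chi> l. \<omega> l)) * \<omega> i \<partial>PiM UNIV (\<lambda>_. std_normal_distribution))
      = (\<integral>\<omega>. u $ i * h' (u \<bullet> (\<chi> l. \<omega> l)) \<partial>PiM UNIV (\<lambda>_. std_normal_distribution))"
    by (intro std_normal_product.product_integral_eq_by_sections[OF finite_class.finite_UNIV UNIV_I int int'])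
  then show ?thesis
    by (simp add: integral_std_gauss_vec)
qed

lemma std_gauss_vec_stein:
  fixes h h' :: "real \<Rightarrow> real" and u :: "real ^ 'd::finite"
  assumes h: "\<And>t. (h has_real_derivative h' t) (at t)" and h': "continuous_on UNIV h'"
    and bounded: "\<And>t. \<bar>h t\<bar> \<le> K" "\<And>t. \<bar>h' t\<bar> \<le> K"
  shows "integrable std_gauss_vec (\<lambda>z. h (u \<bullet> z) *\<^sub>R z)"
    and "(\<integral>z. h (u \<bullet> z) *\<^sub>R z \<partial>std_gauss_vec) = (\<integral>z. h' (u \<bullet> z) \<partial>std_gauss_vec) *\<^sub>R u"
proof -
  interpret prob_space "std_gauss_vec :: (real ^ 'd) measure"
    by (rule prob_space_std_gauss_vec)
  have K: "0 \<le> K"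
    using bounded(1)[of 0] by linarith
  have [measurable]: "h \<in> borel_measurable borel" "h' \<in> borel_measurable borel"
    using h h' by (auto intro: borel_measurable_has_real_derivative borel_measurable_continuous_onI)
  show int: "integrable std_gauss_vec (\<lambda>z. h (u \<bullet> z) *\<^sub>R z)"
  proof (rule Bochner_Integration.integrable_bound)
    show "integrable std_gauss_vec (\<lambda>z. K * norm z)"
      by (intro integrable_mult_right integrable_std_gauss_vec_norm)
    show "AE z in std_gauss_vec. norm (h (u \<bullet> z) *\<^sub>R z) \<le> norm (K * norm z)"
      using K bounded(1) by (intro AE_I2) (auto intro!: mult_right_mono)
  qed measurable
  have "integrable std_gauss_vec (\<lambda>z. h' (u \<bullet> z))"
    by (rule integrable_const_bound[where B = K]) (auto intro: bounded(2))
  then show "(\<integral>z. h (u \<bullet> z) *\<^sub>R z \<partial>std_gauss_vec) = (\<integral>z. h' (u \<bullet> z) \<partial>std_gauss_vec) *\<^sub>R u"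
    using int std_gauss_vec_stein_component[OF h h' bounded, of u]
    by (simp add: vec_eq_iff integral_bounded_linear[OF bounded_linear_vec_nth, symmetric] mult.commute)
qed

lemma inner_matrix_vector_mult: "v \<bullet> (A *v z) = (transpose A *v v) \<bullet> (z :: real ^ 'n::finite)"
  by (simp add: dot_lmul_matrix)

lemma measurable_matrix_vector_mult [measurable]:
  "(\<lambda>z. (A :: real ^ 'n::finite ^ 'm::finite) *v z) \<in> borel_measurable borel"
  by (intro borel_measurable_continuous_onI linear_continuous_on matrix_vector_mul_bounded_linear)

lemma inner_mult_transpose_nonneg:
  fixes A :: "real ^ 'n::finite ^ 'm::finite"
  shows "0 \<le> v \<bullet> ((A ** transpose A) *v v)"
  using inner_matrix_vector_mult[of v A "transpose A *v v"] by (simp add: matrix_vector_mul_assoc[symmetric])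

lemma prob_space_gauss_vec: "prob_space (gauss_vec A)"
  unfolding gauss_vec_def by (intro prob_space.prob_space_distr prob_space_std_gauss_vec) measurable

lemma sets_gauss_vec [simp, measurable_cong]: "sets (gauss_vec A) = sets borel"
  and space_gauss_vec [simp]: "space (gauss_vec A) = UNIV"
  unfolding gauss_vec_def by simp_all

lemma
  fixes f :: "real ^ 'd::finite \<Rightarrow> 'b::{banach, second_countable_topology}"
  assumes [measurable]: "f \<in> borel_measurable borel"
  shows integral_gauss_vec: "integral\<^sup>L (gauss_vec A) f = (\<integral>z. f (A *v z) \<partial>std_gauss_vec)"
    and integrable_gauss_vec: "integrable (gauss_vec A) f \<longleftrightarrow> integrable std_gauss_vec (\<lambda>z. f (A *v z))"
  unfolding gauss_vec_def by (rule integral_distr integrable_distr_eq; measurable)+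

lemma integrable_gauss_vec_norm: "integrable (gauss_vec (A :: real ^ 'd::finite ^ 'd)) norm"
proof -
  obtain C where C: "\<And>z. norm (A *v z) \<le> norm z * C"
    using bounded_linear.bounded[OF matrix_vector_mul_bounded_linear[of A]] by blast
  have "integrable std_gauss_vec (\<lambda>z. norm (A *v z))"
  proof (rule Bochner_Integration.integrable_bound)
    show "integrable std_gauss_vec (\<lambda>z. norm z * C)"
      by (intro integrable_mult_left integrable_std_gauss_vec_norm)
    show "AE z in std_gauss_vec. norm (norm (A *v z)) \<le> norm (norm z * C)"
      using C by (intro AE_I2) (auto intro: order_trans[OF _ abs_ge_self])
  qed measurable
  then show ?thesis
    by (simp add: integrable_gauss_vec)
qed

lemma gauss_vec_mgf:
  fixes v :: "real ^ 'd::finite" and A :: "real ^ 'd ^ 'd"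
  shows "integrable (gauss_vec A) (\<lambda>y. exp (v \<bullet> y))"
    "(\<integral>y. exp (v \<bullet> y) \<partial>gauss_vec A) = exp (v \<bullet> ((A ** transpose A) *v v) / 2)"
  using std_gauss_vec_mgf[of "transpose A *v v"]
  by (simp_all add: integrable_gauss_vec integral_gauss_vec inner_matrix_vector_mult
      matrix_vector_mul_assoc[symmetric])

lemma gauss_vec_stein:
  fixes h h' :: "real \<Rightarrow> real" and v :: "real ^ 'd::finite" and A :: "real ^ 'd ^ 'd"
  assumes h: "\<And>t. (h has_real_derivative h' t) (at t)" "continuous_on UNIV h'"
    and bounded: "\<And>t. \<bar>h t\<bar> \<le> K" "\<And>t. \<bar>h' t\<bar> \<le> K"
  shows "(\<integral>y. h (v \<bullet> y) *\<^sub>R y \<partial>gauss_vec A)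
    = (\<integral>y. h' (v \<bullet> y) \<partial>gauss_vec A) *\<^sub>R ((A ** transpose A) *v v)"
proof -
  have "continuous_on UNIV h"
    using h by (meson DERIV_isCont continuous_at_imp_continuous_on)
  then have [measurable]: "h \<in> borel_measurable borel" "h' \<in> borel_measurable borel"
    using h by (auto intro: borel_measurable_continuous_onI)
  note stein = std_gauss_vec_stein[OF h bounded, of "transpose A *v v"]
  have "(\<integral>y. h (v \<bullet> y) *\<^sub>R y \<partial>gauss_vec A)
      = (\<integral>z. A *v (h ((transpose A *v v) \<bullet> z) *\<^sub>R z) \<partial>std_gauss_vec)"
    by (simp add: integral_gauss_vec inner_matrix_vector_mult matrix_vector_mult_scaleR)
  also have "\<dots> = A *v (\<integral>z. h ((transpose A *v v) \<bullet> z) *\<^sub>R z \<partial>std_gauss_vec)"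
    by (rule integral_bounded_linear[OF matrix_vector_mul_bounded_linear stein(1)])
  also have "\<dots> = (\<integral>y. h' (v \<bullet> y) \<partial>gauss_vec A) *\<^sub>R ((A ** transpose A) *v v)"
    unfolding stein(2)
    by (simp add: matrix_vector_mult_scaleR integral_gauss_vec inner_matrix_vector_mult
        matrix_vector_mul_assoc[symmetric])
  finally show ?thesis .
qed

section \<open>Softmax weights of Gaussian tokens\<close>

lemma inverse_sum_exp_le:
  fixes s :: "'a \<Rightarrow> real"
  assumes "finite K" "K \<noteq> {}"
  shows "1 / (\<Sum>k\<in>K. exp (s k)) \<le> exp (- (\<Sum>k\<in>K. s k) / card K) / card K"
proof -
  have m: "0 < real (card K)"
    using assms by (simp add: card_gt_0_iff)
  have "exp (\<Sum>k\<in>K. (1 / card K) *\<^sub>R s k) \<le> (\<Sum>k\<in>K. (1 / card K) * exp (s k))"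
    using m by (intro convex_on_sum[OF assms exp_convex]) auto
  then have "exp ((\<Sum>k\<in>K. s k) / card K) \<le> (\<Sum>k\<in>K. exp (s k)) / card K"
    by (simp add: sum_divide_distrib)
  then have "1 / (\<Sum>k\<in>K. exp (s k)) \<le> 1 / (card K * exp ((\<Sum>k\<in>K. s k) / card K))"
    using m by (intro frac_le) (auto simp: field_simps)
  then show ?thesis
    by (simp add: exp_minus field_simps)
qed

lemma sum_sq_point_mass_sub_mean_le:
  assumes "finite K" "j \<in> K"
  shows "(\<Sum>k\<in>K. ((if k = j then 2 else 0) - 2 / real (card K))\<^sup>2) \<le> 4"
proof -
  define m where "m = real (card K)"
  have m: "0 < m"
    using assms by (auto simp: m_def card_gt_0_iff)
  have "((if k = j then 2 else 0) - 2 / m)\<^sup>2 = (if k = j then 4 - 8 / m else 0) + 4 / m\<^sup>2" for k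
    using m by (simp add: power2_eq_square field_simps)
  then have "(\<Sum>k\<in>K. ((if k = j then 2 else 0) - 2 / m)\<^sup>2) = (4 - 8 / m) + m * (4 / m\<^sup>2)"
    using assms by (simp add: sum.distrib m_def)
  also have "\<dots> = 4 - 4 / m"
    using m by (simp add: power2_eq_square field_simps)
  finally show ?thesis
    using m by (simp add: m_def)
qed

lemma abs_sub_sq_le_1:
  fixes p :: real
  assumes "0 \<le> p" "p \<le> 1"
  shows "\<bar>p - p\<^sup>2\<bar> \<le> 1"
  unfolding power2_eq_square abs_le_iff
  using assms mult_left_le[OF assms(2,1)] mult_nonneg_nonneg[OF assms(1,1)] by linarith

lemma logistic_has_real_derivative:
  fixes C t :: real
  assumes "0 < C"
  shows "((\<lambda>t. exp t / (C + exp t)) has_real_derivative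
    exp t / (C + exp t) - (exp t / (C + exp t))\<^sup>2) (at t)"
proof -
  have "C + exp t \<noteq> 0"
    using assms exp_gt_zero[of t] by linarith
  moreover have "(E * D - E * E) / D\<^sup>2 = E / D - (E / D)\<^sup>2" if "D \<noteq> 0" for D E :: real
    using that by (simp add: field_simps power2_eq_square)
  ultimately show ?thesis
    by (auto intro!: derivative_eq_intros simp: power2_eq_square)
qed

lemma logistic_bounds:
  fixes C t :: real
  assumes "0 < C"
  shows "\<bar>exp t / (C + exp t)\<bar> \<le> 1" "\<bar>exp t / (C + exp t) - (exp t / (C + exp t))\<^sup>2\<bar> \<le> 1"
proof -
  have pos: "0 < C + exp t"
    using assms exp_gt_zero[of t] by linarith
  then have p: "0 \<le> exp t / (C + exp t)" "exp t / (C + exp t) \<le> 1"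
    using assms by simp_all
  then show "\<bar>exp t / (C + exp t)\<bar> \<le> 1"
    using pos by (simp add: abs_of_pos)
  show "\<bar>exp t / (C + exp t) - (exp t / (C + exp t))\<^sup>2\<bar> \<le> 1"
    by (rule abs_sub_sq_le_1[OF p])
qed

lemma continuous_on_logistic:
  fixes C :: real
  assumes "0 < C"
  shows "continuous_on UNIV (\<lambda>t. exp t / (C + exp t) - (exp t / (C + exp t))\<^sup>2)"
proof -
  have "C + exp t \<noteq> 0" for t
    using assms exp_gt_zero[of t] by linarith
  then show ?thesis
    by (intro continuous_intros) auto
qed

lemma integral_scaleR_left_unconditional:
  fixes c :: "'b::euclidean_space"
  shows "(\<integral>x. f x *\<^sub>R c \<partial>M) = integral\<^sup>L M f *\<^sub>R c"
proof (rule integral_bounded_linear'[where T = "\<lambda>r. r *\<^sub>R c" and T' = "\<lambda>x. x \<bullet> (c /\<^sub>R (c \<bullet> c))"])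
  show "bounded_linear (\<lambda>r::real. r *\<^sub>R c)" "bounded_linear (\<lambda>x. x \<bullet> (c /\<^sub>R (c \<bullet> c)))"
    by (rule bounded_linear_scaleR_left bounded_linear_inner_left)+
  show "\<not> (\<forall>x. x *\<^sub>R c = 0) \<Longrightarrow> \<forall>x. (x *\<^sub>R c) \<bullet> (c /\<^sub>R (c \<bullet> c)) = x"
    by auto
qed

text \<open>\<open>self_weight\<close> and \<open>weight j\<close> are the paper's \<open>p\<^sub>1\<^sub>1\<close> and \<open>p\<^sub>1\<^sub>j\<close> for the tokens
  \<open>w k\<close>, \<open>k \<in> K\<close>, when \<open>a = x\<^sub>1\<^sup>T B x\<^sub>1\<close> and \<open>v = B\<^sup>T x\<^sub>1\<close>.\<close>
locale softmax_gaussian_tokens =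
  fixes A :: "real ^ 'd::finite ^ 'd" and a :: real and v :: "real ^ 'd" and K :: "nat set"
  assumes finite_tokens: "finite K"
begin

abbreviation M :: "(nat \<Rightarrow> real ^ 'd) measure"
  where "M \<equiv> PiM K (\<lambda>_. gauss_vec A)"

definition Z :: "(nat \<Rightarrow> real ^ 'd) \<Rightarrow> real"
  where "Z w = exp a + (\<Sum>k\<in>K. exp (v \<bullet> w k))"

definition self_weight :: "(nat \<Rightarrow> real ^ 'd) \<Rightarrow> real"
  where "self_weight w = exp a / Z w"

definition weight :: "nat \<Rightarrow> (nat \<Rightarrow> real ^ 'd) \<Rightarrow> real"
  where "weight j w = exp (v \<bullet> w j) / Z w"

sublocale tokens: product_sigma_finite "\<lambda>_::nat. gauss_vec A"
  by (simp add: product_sigma_finite_def prob_space_imp_sigma_finite prob_space_gauss_vec)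

lemma prob_space_M: "prob_space M"
  by (intro prob_space_PiM prob_space_gauss_vec)

lemma measurable_Z [measurable]: "Z \<in> borel_measurable M"
  unfolding Z_def[abs_def] using finite_tokens by measurable

lemma measurable_weight [measurable]: "weight j \<in> borel_measurable M" if "j \<in> K"
  unfolding weight_def[abs_def] using that by measurable

lemma measurable_self_weight [measurable]: "self_weight \<in> borel_measurable M"
  unfolding self_weight_def[abs_def] by measurable

lemma Z_pos: "0 < Z w"
  unfolding Z_def by (intro add_pos_nonneg sum_nonneg) auto

lemma weight_nonneg: "0 \<le> weight j w" and self_weight_nonneg: "0 \<le> self_weight w"
  using Z_pos[of w] by (simp_all add: weight_def self_weight_def)

lemma weight_le_1: "weight j w \<le> 1" if "j \<in> K"
proof -
  have "exp (v \<bullet> w j) \<le> (\<Sum>k\<in>K. exp (v \<bullet> w k))"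
    using that finite_tokens by (intro member_le_sum) auto
  then show ?thesis
    using Z_pos[of w] by (simp add: weight_def Z_def add_increasing)
qed

lemma self_weight_le_1: "self_weight w \<le> 1"
  using Z_pos[of w] by (simp add: self_weight_def Z_def sum_nonneg)

lemma integrable_self_weight: "integrable M self_weight"
proof -
  interpret prob_space M
    by (rule prob_space_M)
  show ?thesis
    using self_weight_nonneg self_weight_le_1 by (intro integrable_const_bound[where B = 1] AE_I2) auto
qed

lemma self_weight_add_sum_weight: "self_weight w + (\<Sum>j\<in>K. weight j w) = 1"
  using Z_pos[of w] by (simp add: self_weight_def weight_def Z_def flip: add_divide_distrib sum_divide_distrib)

lemma integral_exp_sum_scores:
  "integrable M (\<lambda>w. exp (\<Sum>k\<in>K. c k * (v \<bullet> w k)))"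
  "(\<integral>w. exp (\<Sum>k\<in>K. c k * (v \<bullet> w k)) \<partial>M)
    = exp ((\<Sum>k\<in>K. (c k)\<^sup>2) * (v \<bullet> ((A ** transpose A) *v v)) / 2)"
proof -
  have exp_sum_eq: "exp (\<Sum>k\<in>K. c k * (v \<bullet> w k)) = (\<Prod>k\<in>K. exp ((c k *\<^sub>R v) \<bullet> w k))" for w
    using finite_tokens by (simp add: exp_sum)
  show "integrable M (\<lambda>w. exp (\<Sum>k\<in>K. c k * (v \<bullet> w k)))"
    unfolding exp_sum_eq using finite_tokens by (intro tokens.product_integrable_prod gauss_vec_mgf)
  have "(\<integral>w. (\<Prod>k\<in>K. exp ((c k *\<^sub>R v) \<bullet> w k)) \<partial>M)
      = (\<Prod>k\<in>K. (\<integral>y. exp ((c k *\<^sub>R v) \<bullet> y) \<partial>gauss_vec A))"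
    by (rule tokens.product_integral_prod[OF finite_tokens]) (rule gauss_vec_mgf)
  also have "\<dots> = (\<Prod>k\<in>K. exp ((c k *\<^sub>R v) \<bullet> ((A ** transpose A) *v (c k *\<^sub>R v)) / 2))"
    by (simp only: gauss_vec_mgf)
  also have "\<dots> = exp ((\<Sum>k\<in>K. (c k)\<^sup>2) * (v \<bullet> ((A ** transpose A) *v v)) / 2)"
    using finite_tokens
    by (simp add: exp_sum matrix_vector_mult_scaleR sum_distrib_right sum_divide_distrib power2_eq_square
        mult.assoc)
  finally show "(\<integral>w. exp (\<Sum>k\<in>K. c k * (v \<bullet> w k)) \<partial>M)
    = exp ((\<Sum>k\<in>K. (c k)\<^sup>2) * (v \<bullet> ((A ** transpose A) *v v)) / 2)"
    by (simp only: exp_sum_eq)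
qed

lemma integrable_weight: "integrable M (weight j)"
  and integrable_weight_sq: "integrable M (\<lambda>w. (weight j w)\<^sup>2)" if "j \<in> K"
proof -
  interpret prob_space M
    by (rule prob_space_M)
  show "integrable M (weight j)" "integrable M (\<lambda>w. (weight j w)\<^sup>2)"
    using that weight_nonneg weight_le_1
    by (intro integrable_const_bound[where B = 1] AE_I2; simp add: power_le_one)+
qed

lemma integrable_weight_scaleR_token: "integrable M (\<lambda>w. weight j w *\<^sub>R w j)" if "j \<in> K"
proof (rule Bochner_Integration.integrable_bound)
  show "integrable M (\<lambda>w. norm (w j))"
    using that by (intro integrable_PiM_component prob_space_gauss_vec integrable_gauss_vec_norm)
  show "AE w in M. norm (weight j w *\<^sub>R w j) \<le> norm (norm (w j))"
    using weight_nonneg weight_le_1[OF that] by (intro AE_I2) (auto intro!: mult_left_le_one_le)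
qed (use that in measurable)

lemma weight_fun_upd:
  assumes "j \<in> K"
  shows "weight j (w(j := y)) = exp (v \<bullet> y) / ((exp a + (\<Sum>k\<in>K - {j}. exp (v \<bullet> w k))) + exp (v \<bullet> y))"
proof -
  have "(\<Sum>k\<in>K. exp (v \<bullet> (w(j := y)) k)) = exp (v \<bullet> y) + (\<Sum>k\<in>K - {j}. exp (v \<bullet> (w(j := y)) k))"
    using assms finite_tokens by (simp add: sum.remove)
  also have "(\<Sum>k\<in>K - {j}. exp (v \<bullet> (w(j := y)) k)) = (\<Sum>k\<in>K - {j}. exp (v \<bullet> w k))"
    by (intro sum.cong) auto
  finally show ?thesis
    by (simp add: weight_def Z_def ac_simps)
qed

lemma integral_weight_fun_upd_scaleR:
  assumes "j \<in> K"
  shows "(\<integral>y. weight j (w(j := y)) *\<^sub>R y \<partial>gauss_vec A)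
    = (\<integral>y. (weight j (w(j := y)) - (weight j (w(j := y)))\<^sup>2) *\<^sub>R ((A ** transpose A) *v v) \<partial>gauss_vec A)"
proof -
  define C where "C = exp a + (\<Sum>k\<in>K - {j}. exp (v \<bullet> w k))"
  have "0 < C"
    unfolding C_def by (intro add_pos_nonneg sum_nonneg) auto
  then show ?thesis
    using gauss_vec_stein[OF logistic_has_real_derivative _ logistic_bounds, of C]
    by (simp add: weight_fun_upd[OF assms] C_def[symmetric] continuous_on_logistic
        integral_scaleR_left_unconditional)
qed

text \<open>Stein's identity in the token \<open>w j\<close>, the other tokens being frozen.\<close>
lemma integral_weight_scaleR_token:
  assumes "j \<in> K"
  shows "(\<integral>w. weight j w *\<^sub>R w j \<partial>M)
    = (\<integral>w. weight j w - (weight j w)\<^sup>2 \<partial>M) *\<^sub>R ((A ** transpose A) *v v)"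
proof -
  have int: "integrable M (\<lambda>w. weight j w - (weight j w)\<^sup>2)"
    using assms by (intro Bochner_Integration.integrable_diff integrable_weight integrable_weight_sq)
  have "(\<integral>w. weight j w *\<^sub>R w j \<partial>M)
      = (\<integral>w. (weight j w - (weight j w)\<^sup>2) *\<^sub>R ((A ** transpose A) *v v) \<partial>M)"
    using integrable_weight_scaleR_token[OF assms] int integral_weight_fun_upd_scaleR[OF assms]
    by (intro tokens.product_integral_eq_by_sections[OF finite_tokens assms]) simp_all
  then show ?thesis
    using int by simp
qed

lemma inverse_sum_exp_scores_le:
  assumes "K \<noteq> {}"
  shows "1 / (\<Sum>k\<in>K. exp (v \<bullet> w k)) \<le> exp (\<Sum>k\<in>K. - 1 / card K * (v \<bullet> w k)) / card K"
  using inverse_sum_exp_le[OF finite_tokens assms, of "\<lambda>k. v \<bullet> w k"]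
  by (simp add: sum_divide_distrib sum_negf)

lemma integral_self_weight_le:
  assumes "K \<noteq> {}"
  shows "(\<integral>w. self_weight w \<partial>M)
    \<le> exp a / card K * exp (v \<bullet> ((A ** transpose A) *v v) / (2 * real (card K)))"
proof -
  interpret prob_space M
    by (rule prob_space_M)
  have m: "0 < real (card K)"
    using assms finite_tokens by (simp add: card_gt_0_iff)
  note mgf = integral_exp_sum_scores[where c = "\<lambda>_. - 1 / card K"]
  have "self_weight w \<le> exp a / card K * exp (\<Sum>k\<in>K. - 1 / card K * (v \<bullet> w k))" for w
  proof -
    have "self_weight w \<le> exp a * (1 / (\<Sum>k\<in>K. exp (v \<bullet> w k)))"
      using assms finite_tokens
      by (simp add: self_weight_def Z_def frac_le sum_pos add_pos_pos)
    also have "\<dots> \<le> exp a * (exp (\<Sum>k\<in>K. - 1 / card K * (v \<bullet> w k)) / card K)"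
      by (intro mult_left_mono inverse_sum_exp_scores_le assms) simp
    finally show ?thesis
      by simp
  qed
  then have "(\<integral>w. self_weight w \<partial>M)
      \<le> (\<integral>w. exp a / card K * exp (\<Sum>k\<in>K. - 1 / card K * (v \<bullet> w k)) \<partial>M)"
    using integrable_self_weight mgf(1) by (intro integral_mono integrable_mult_right)
  also have "\<dots> = exp a / card K * (\<integral>w. exp (\<Sum>k\<in>K. - 1 / card K * (v \<bullet> w k)) \<partial>M)"
    by (rule integral_mult_right_zero)
  also have "\<dots> = exp a / card K * exp (v \<bullet> ((A ** transpose A) *v v) / (2 * real (card K)))"
    unfolding mgf(2) using m by (simp add: power2_eq_square)
  finally show ?thesis .
qed

lemma weight_sq_le:
  assumes j: "j \<in> K"
  shows "(weight j w)\<^sup>2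
    \<le> exp (\<Sum>k\<in>K. ((if k = j then 2 else 0) - 2 / card K) * (v \<bullet> w k)) / (real (card K))\<^sup>2"
proof -
  define m where "m = real (card K)"
  define S where "S = (\<Sum>k\<in>K. - 1 / m * (v \<bullet> w k))"
  have "0 < (\<Sum>k\<in>K. exp (v \<bullet> w k))"
    using j finite_tokens by (intro sum_pos) auto
  then have "weight j w \<le> exp (v \<bullet> w j) * (1 / (\<Sum>k\<in>K. exp (v \<bullet> w k)))"
    by (simp add: weight_def Z_def frac_le)
  also have "\<dots> \<le> exp (v \<bullet> w j) * (exp S / m)"
    unfolding S_def m_def using j by (intro mult_left_mono inverse_sum_exp_scores_le) auto
  finally have "(weight j w)\<^sup>2 \<le> (exp (v \<bullet> w j) * (exp S / m))\<^sup>2"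
    using weight_nonneg by (intro power_mono)
  also have "\<dots> = exp (2 * (v \<bullet> w j) + 2 * S) / m\<^sup>2"
    by (simp add: power2_eq_square power_divide exp_add[symmetric] field_simps)
  also have "2 * (v \<bullet> w j) + 2 * S = (\<Sum>k\<in>K. ((if k = j then 2 else 0) - 2 / m) * (v \<bullet> w k))"
  proof -
    have "((if k = j then 2 else 0) - 2 / m) * y = (if k = j then 2 * y else 0) - 2 / m * y" for k y
      by (simp add: algebra_simps)
    then show ?thesis
      using j finite_tokens by (simp add: S_def sum_subtractf sum_distrib_left sum_negf sum_divide_distrib)
  qed
  finally show ?thesis
    by (simp add: m_def)
qed

lemma integral_weight_sq_le:
  assumes j: "j \<in> K"
  shows "(\<integral>w. (weight j w)\<^sup>2 \<partial>M) \<le> exp (2 * (v \<bullet> ((A ** transpose A) *v v))) / (real (card K))\<^sup>2"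
proof -
  define c where "c k = (if k = j then 2 else 0) - 2 / real (card K)" for k
  note mgf = integral_exp_sum_scores[where c = c]
  have "(\<integral>w. (weight j w)\<^sup>2 \<partial>M) \<le> (\<integral>w. exp (\<Sum>k\<in>K. c k * (v \<bullet> w k)) / (real (card K))\<^sup>2 \<partial>M)"
    using mgf(1) integrable_weight_sq[OF j] weight_sq_le[OF j] by (intro integral_mono) (auto simp: c_def)
  also have "\<dots> = exp ((\<Sum>k\<in>K. (c k)\<^sup>2) * (v \<bullet> ((A ** transpose A) *v v)) / 2) / (real (card K))\<^sup>2"
    by (simp only: integral_divide_zero mgf(2))
  also have "\<dots> \<le> exp (2 * (v \<bullet> ((A ** transpose A) *v v))) / (real (card K))\<^sup>2"
    using mult_right_mono[OF sum_sq_point_mass_sub_mean_le[OF finite_tokens j] inner_mult_transpose_nonneg[of v A]]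
    by (intro divide_right_mono) (simp_all add: c_def)
  finally show ?thesis .
qed

lemma sum_integral_weight_sq_le:
  "(\<Sum>j\<in>K. \<integral>w. (weight j w)\<^sup>2 \<partial>M) \<le> exp (2 * (v \<bullet> ((A ** transpose A) *v v))) / card K"
proof -
  have "(\<Sum>j\<in>K. \<integral>w. (weight j w)\<^sup>2 \<partial>M)
      \<le> (\<Sum>j\<in>K. exp (2 * (v \<bullet> ((A ** transpose A) *v v))) / (real (card K))\<^sup>2)"
    by (intro sum_mono integral_weight_sq_le)
  then show ?thesis
    by (cases "card K = 0") (simp_all add: power2_eq_square)
qed

lemma integral_softmax_average_sub:
  "(\<integral>w. self_weight w *\<^sub>R x + (\<Sum>j\<in>K. weight j w *\<^sub>R w j) \<partial>M) - (A ** transpose A) *v v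
    = (\<integral>w. self_weight w \<partial>M) *\<^sub>R (x - (A ** transpose A) *v v)
      - (\<Sum>j\<in>K. \<integral>w. (weight j w)\<^sup>2 \<partial>M) *\<^sub>R ((A ** transpose A) *v v)"
proof -
  interpret prob_space M
    by (rule prob_space_M)
  have "(\<Sum>j\<in>K. \<integral>w. weight j w \<partial>M) = (\<integral>w. (\<Sum>j\<in>K. weight j w) \<partial>M)"
    using integrable_weight by (simp add: Bochner_Integration.integral_sum)
  also have "\<dots> = (\<integral>w. 1 - self_weight w \<partial>M)"
    using self_weight_add_sum_weight by (metis add_diff_cancel_left')
  also have "\<dots> = 1 - (\<integral>w. self_weight w \<partial>M)"
    using integrable_self_weight by (simp add: prob_space)
  finally have sum_weight: "(\<Sum>j\<in>K. \<integral>w. weight j w \<partial>M) = 1 - (\<integral>w. self_weight w \<partial>M)" .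
  have "(\<integral>w. self_weight w *\<^sub>R x + (\<Sum>j\<in>K. weight j w *\<^sub>R w j) \<partial>M)
      = (\<integral>w. self_weight w \<partial>M) *\<^sub>R x + (\<Sum>j\<in>K. \<integral>w. weight j w *\<^sub>R w j \<partial>M)"
    using integrable_self_weight integrable_weight_scaleR_token
    by (simp add: Bochner_Integration.integral_sum)
  also have "(\<Sum>j\<in>K. \<integral>w. weight j w *\<^sub>R w j \<partial>M)
      = (\<Sum>j\<in>K. ((\<integral>w. weight j w \<partial>M) - (\<integral>w. (weight j w)\<^sup>2 \<partial>M)) *\<^sub>R ((A ** transpose A) *v v))"
    using integral_weight_scaleR_token integrable_weight integrable_weight_sq
    by (intro sum.cong) simp_all
  finally show ?thesis
    by (simp add: sum_weight sum_subtractf algebra_simps flip: scaleR_sum_left)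
qed

lemma attn_mu1_eq_softmax_average:
  assumes "{1..n} = insert 1 K" "1 \<notin> K"
    and "x \<bullet> (B *v x) = a" "\<And>y. x \<bullet> (B *v y) = v \<bullet> y"
  shows "attn_mu1 n B x w = self_weight w *\<^sub>R x + (\<Sum>j\<in>K. weight j w *\<^sub>R w j)"
proof -
  have "(if k = 1 then x else w k) = w k" if "k \<in> K" for k
    using assms(2) that by auto
  then show ?thesis
    using assms finite_tokens
    by (simp add: attn_mu1_def Let_def self_weight_def weight_def Z_def cong: sum.cong)
qed

end

section \<open>The bias of the attention output\<close>

lemma norm_scaleR_diff_sq_le:
  fixes x y :: "'a::real_normed_vector"
  assumes "0 \<le> P" "P \<le> p" "0 \<le> Q" "Q \<le> q" "norm x \<le> X" "norm y \<le> Y"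
  shows "(norm (P *\<^sub>R x - Q *\<^sub>R y))\<^sup>2 \<le> 2 * p\<^sup>2 * X\<^sup>2 + 2 * q\<^sup>2 * Y\<^sup>2"
proof -
  have "norm (P *\<^sub>R x - Q *\<^sub>R y) \<le> P * norm x + Q * norm y"
    using norm_triangle_ineq4[of "P *\<^sub>R x" "Q *\<^sub>R y"] assms(1,3) by simp
  also have "\<dots> \<le> p * X + q * Y"
    using assms by (intro add_mono mult_mono) auto
  finally have "(norm (P *\<^sub>R x - Q *\<^sub>R y))\<^sup>2 \<le> (p * X + q * Y)\<^sup>2"
    by (rule power_mono) simp
  also have "\<dots> \<le> 2 * p\<^sup>2 * X\<^sup>2 + 2 * q\<^sup>2 * Y\<^sup>2"
    using zero_le_power2[of "p * X - q * Y"]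
    unfolding power2_eq_square by (simp add: algebra_simps)
  finally show ?thesis .
qed

lemma softmax_bias_estimate:
  fixes x y :: "'a::real_normed_vector"
  assumes P: "0 \<le> P" "P \<le> exp a / m * exp (q / (2 * m))"
    and Q: "0 \<le> Q" "Q \<le> exp (2 * q) / m"
    and "0 < m" "0 \<le> q" "norm x \<le> c * r" "norm y \<le> d * r"
  shows "(norm (P *\<^sub>R x - Q *\<^sub>R y))\<^sup>2
    \<le> 2 * c\<^sup>2 / m\<^sup>2 * exp (2 / m * q) * exp (2 * a) * r\<^sup>2 + 2 * d\<^sup>2 / m\<^sup>2 * exp (4 * q) * r\<^sup>2"
proof -
  have "(exp a / m * exp (q / (2 * m)))\<^sup>2 = exp (q / m) * exp (2 * a) / m\<^sup>2"
    by (simp add: power2_eq_square mult_exp_exp field_simps)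
  also have "\<dots> \<le> exp (2 / m * q) * exp (2 * a) / m\<^sup>2"
    using assms(5,6) by (intro divide_right_mono mult_right_mono) (simp_all add: field_simps)
  finally have "2 * (exp a / m * exp (q / (2 * m)))\<^sup>2 * (c * r)\<^sup>2
      \<le> 2 * (exp (2 / m * q) * exp (2 * a) / m\<^sup>2) * (c * r)\<^sup>2"
    by (intro mult_right_mono mult_left_mono) auto
  also have "\<dots> = 2 * c\<^sup>2 / m\<^sup>2 * exp (2 / m * q) * exp (2 * a) * r\<^sup>2"
    by (simp add: power_mult_distrib)
  moreover have "2 * (exp (2 * q) / m)\<^sup>2 * (d * r)\<^sup>2 = 2 * d\<^sup>2 / m\<^sup>2 * exp (4 * q) * r\<^sup>2"
    by (simp add: power2_eq_square mult_exp_exp field_simps)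
  ultimately show ?thesis
    using norm_scaleR_diff_sq_le[OF P Q assms(7,8)] by linarith
qed

lemma norm_matrix_vector_mult_le_op_norm: "norm (M *v x) \<le> op_norm M * norm x"
  unfolding op_norm_def by (rule onorm[OF matrix_vector_mul_bounded_linear])

theorem lemma11:
  fixes n :: nat and Sigma A B :: "real ^ 'd ^ 'd" and x1 :: "real ^ 'd"
  assumes "n \<ge> 2"
    and "transpose Sigma = Sigma"
    and "\<forall>v. 0 \<le> v \<bullet> (Sigma *v v)"
    and "A ** transpose A = Sigma"
  shows "(norm ((\<integral>xs. attn_mu1 n B x1 xs \<partial>(PiM {2..n} (\<lambda>_. gauss_vec A)))
                 - (Sigma ** transpose B) *v x1))\<^sup>2
         \<le> 2 * (op_norm (mat 1 - Sigma ** transpose B))\<^sup>2 / (real n - 1)\<^sup>2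
             * exp (2 / (real n - 1) * (x1 \<bullet> ((B ** Sigma ** transpose B) *v x1)))
             * exp (2 * (x1 \<bullet> (B *v x1))) * (norm x1)\<^sup>2
           + 2 * (op_norm (Sigma ** transpose B))\<^sup>2 / (real n - 1)\<^sup>2
             * exp (4 * (x1 \<bullet> ((B ** Sigma ** transpose B) *v x1))) * (norm x1)\<^sup>2"
proof -
  define v where "v = transpose B *v x1"
  interpret softmax_gaussian_tokens A "x1 \<bullet> (B *v x1)" v "{2..n}"
    by unfold_locales simp
  have m: "real (card {2..n}) = real n - 1" "0 < real n - 1"
    using assms(1) by (auto simp: of_nat_diff)
  have Sigma_v: "(A ** transpose A) *v v = (Sigma ** transpose B) *v x1"
    unfolding v_def using assms(4) by (simp only: matrix_vector_mul_assoc)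
  have q: "v \<bullet> ((A ** transpose A) *v v) = x1 \<bullet> ((B ** Sigma ** transpose B) *v x1)"
    unfolding Sigma_v unfolding v_def
    using inner_matrix_vector_mult[of x1 B "(Sigma ** transpose B) *v x1"]
    by (simp only: matrix_vector_mul_assoc matrix_mul_assoc)
  have "attn_mu1 n B x1 w = self_weight w *\<^sub>R x1 + (\<Sum>j\<in>{2..n}. weight j w *\<^sub>R w j)" for w
    using assms(1) by (intro attn_mu1_eq_softmax_average) (auto simp: v_def inner_matrix_vector_mult)
  with integral_softmax_average_sub[of x1]
  have bias: "(\<integral>xs. attn_mu1 n B x1 xs \<partial>M) - (Sigma ** transpose B) *v x1
      = (\<integral>w. self_weight w \<partial>M) *\<^sub>R (x1 - (Sigma ** transpose B) *v x1)
        - (\<Sum>j\<in>{2..n}. \<integral>w. (weight j w)\<^sup>2 \<partial>M) *\<^sub>R ((Sigma ** transpose B) *v x1)"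
    by (simp only: Sigma_v)
  have "norm (x1 - (Sigma ** transpose B) *v x1) \<le> op_norm (mat 1 - Sigma ** transpose B) * norm x1"
    using norm_matrix_vector_mult_le_op_norm[of "mat 1 - Sigma ** transpose B" x1]
    by (simp add: matrix_vector_mult_diff_rdistrib)
  then show ?thesis
    unfolding bias
    using integral_self_weight_le[unfolded m(1) q] sum_integral_weight_sq_le[unfolded m(1) q] assms(1)
      inner_mult_transpose_nonneg[of v A, unfolded q]
    by (intro softmax_bias_estimate norm_matrix_vector_mult_le_op_norm m(2)
        integral_nonneg_AE sum_nonneg AE_I2 self_weight_nonneg) auto
qed

end
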